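(* Let $\mathcal{T}\in\mathbb{K}^{R\times R\times 2}$ have $\mathbb{K}$-rank $R$ with CPD $[\![\mathbf{A},\mathbf{B},\mathbf{C}]\!]$, where $\mathbf{C}$ has columns $\mathbf{c}_1,\dots,\mathbf{c}_R$ of unit norm, and let $\mathscr{L}_1,\dots,\mathscr{L}_R$ be the JGE values of $\mathcal{T}$, $\mathscr{L}_r=\mathrm{span}(\mathbf{c}_r)$. Let $\mathcal{E}\in\mathbb{K}^{R\times R\times 2}$ satisfy $$\|\mathcal{E}\|_{\mathrm{sp}}<\frac{\sigma_{\min}(\mathbf{A})\,\sigma_{\min}(\mathbf{B})\,\min_{i\neq j}\chi(\mathscr{L}_i,\mathscr{L}_j)}{2}.$$ Then $\mathcal{T}+\mathcal{E}$ is slice mix invertible and has border $\mathbb{C}$-rank equal to $R$.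
   Context: $\mathbb{K}$ denotes $\mathbb{R}$ or $\mathbb{C}$; $\sigma_{\min}$ is the smallest (possibly zero) singular value. CPD $[\![\mathbf{A},\mathbf{B},\mathbf{C}]\!]=\sum_r\mathbf{a}_r\otimes\mathbf{b}_r\otimes\mathbf{c}_r$ with the minimal number of rank one terms ($\mathbb{K}$-rank). Border $\mathbb{C}$-rank: least $R$ such that the tensor is a limit of tensors of complex rank at most $R$. A tensor is slice mix invertible if some linear combination of its frontal slices is invertible. A JGE value of $\mathcal{T}$ with slices $\mathbf{T}_k$ is $\mathrm{span}(\boldsymbol{\lambda})$ where $\mathbf{T}_\ell\mathbf{x}=\lambda_\ell\mathbf{y}$ for all $\ell$ for some nonzero $\mathbf{x},\mathbf{y}$. Chordal metric $\chi$: sine of the angle between one-dimensional subspaces. Spectral norm $\|\mathcal{M}\|_{\mathrm{sp}}=\max_{\|\mathbf{x}\|=\|\mathbf{y}\|=\|\mathbf{z}\|=1}|\mathcal{M}\cdot_1\mathbf{x}\cdot_2\mathbf{y}\cdot_3\mathbf{z}|$. *)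

theory Defs
  imports Complex_Main "Jordan_Normal_Form.Matrix"
begin

text \<open>Third-order tensors of size I x J x L are functions nat => nat => nat => complex,
  only the entries with indices i < I, j < J, k < L are relevant.
  Matrices of size m x n are functions nat => nat => complex (entries i < m, j < n).
  The field K is modelled as a subset of the complex numbers: either the reals or all of C.\<close>

type_synonym tensor3 = "nat \<Rightarrow> nat \<Rightarrow> nat \<Rightarrow> complex"
type_synonym nmat = "nat \<Rightarrow> nat \<Rightarrow> complex"

definition mat_in :: "complex set \<Rightarrow> nat \<Rightarrow> nat \<Rightarrow> nmat \<Rightarrow> bool" where
  "mat_in K m n M \<longleftrightarrow> (\<forall>i<m. \<forall>j<n. M i j \<in> K)"

definition vec_in :: "complex set \<Rightarrow> nat \<Rightarrow> (nat \<Rightarrow> complex) \<Rightarrow> bool" where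
  "vec_in K n x \<longleftrightarrow> (\<forall>i<n. x i \<in> K)"

definition tensor_in :: "complex set \<Rightarrow> nat \<Rightarrow> nat \<Rightarrow> nat \<Rightarrow> tensor3 \<Rightarrow> bool" where
  "tensor_in K I J L T \<longleftrightarrow> (\<forall>i<I. \<forall>j<J. \<forall>k<L. T i j k \<in> K)"

definition tensor_eq :: "nat \<Rightarrow> nat \<Rightarrow> nat \<Rightarrow> tensor3 \<Rightarrow> tensor3 \<Rightarrow> bool" where
  "tensor_eq I J L S T \<longleftrightarrow> (\<forall>i<I. \<forall>j<J. \<forall>k<L. S i j k = T i j k)"

definition tadd :: "tensor3 \<Rightarrow> tensor3 \<Rightarrow> tensor3" where
  "tadd S T = (\<lambda>i j k. S i j k + T i j k)"

definition cpd :: "nat \<Rightarrow> nmat \<Rightarrow> nmat \<Rightarrow> nmat \<Rightarrow> tensor3" where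
  "cpd n A B C = (\<lambda>i j k. \<Sum>r<n. A i r * B j r * C k r)"

definition rank_le :: "complex set \<Rightarrow> nat \<Rightarrow> nat \<Rightarrow> nat \<Rightarrow> tensor3 \<Rightarrow> nat \<Rightarrow> bool" where
  "rank_le K I J L T n \<longleftrightarrow>
     (\<exists>A B C. mat_in K I n A \<and> mat_in K J n B \<and> mat_in K L n C \<and> tensor_eq I J L T (cpd n A B C))"

definition tensor_rank :: "complex set \<Rightarrow> nat \<Rightarrow> nat \<Rightarrow> nat \<Rightarrow> tensor3 \<Rightarrow> nat" where
  "tensor_rank K I J L T = (LEAST n. rank_le K I J L T n)"

text \<open>Border C-rank: least n such that T is a limit of tensors of complex rank at most n
  (entrywise convergence = convergence in the finite-dimensional space).\<close>
definition border_rank_le :: "nat \<Rightarrow> nat \<Rightarrow> nat \<Rightarrow> tensor3 \<Rightarrow> nat \<Rightarrow> bool" where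
  "border_rank_le I J L T n \<longleftrightarrow>
     (\<exists>S :: nat \<Rightarrow> tensor3. (\<forall>m. rank_le UNIV I J L (S m) n) \<and>
        (\<forall>i<I. \<forall>j<J. \<forall>k<L. (\<lambda>m. S m i j k) \<longlonglongrightarrow> T i j k))"

definition border_rank :: "nat \<Rightarrow> nat \<Rightarrow> nat \<Rightarrow> tensor3 \<Rightarrow> nat" where
  "border_rank I J L T = (LEAST n. border_rank_le I J L T n)"

definition slice_mix_invertible :: "complex set \<Rightarrow> nat \<Rightarrow> nat \<Rightarrow> tensor3 \<Rightarrow> bool" where
  "slice_mix_invertible K n L T \<longleftrightarrow>
     (\<exists>c. vec_in K L c \<and> invertible_mat (mat n n (\<lambda>(i, j). \<Sum>k<L. c k * T i j k)))"

definition vnorm :: "nat \<Rightarrow> (nat \<Rightarrow> complex) \<Rightarrow> real" where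
  "vnorm n x = sqrt (\<Sum>i<n. (cmod (x i))\<^sup>2)"

definition vinner :: "nat \<Rightarrow> (nat \<Rightarrow> complex) \<Rightarrow> (nat \<Rightarrow> complex) \<Rightarrow> complex" where
  "vinner n x y = (\<Sum>i<n. x i * cnj (y i))"

definition col :: "nmat \<Rightarrow> nat \<Rightarrow> (nat \<Rightarrow> complex)" where
  "col M r = (\<lambda>i. M i r)"

definition mat_vec :: "nat \<Rightarrow> nmat \<Rightarrow> (nat \<Rightarrow> complex) \<Rightarrow> (nat \<Rightarrow> complex)" where
  "mat_vec n M x = (\<lambda>i. \<Sum>j<n. M i j * x j)"

definition sigma_min :: "nat \<Rightarrow> nmat \<Rightarrow> real" where
  "sigma_min n M = Inf {vnorm n (mat_vec n M x) | x. vnorm n x = 1}"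

text \<open>Chordal metric between the one-dimensional subspaces span(x) and span(y) of K^n
  (x, y nonzero): the sine of the angle between them.\<close>
definition chordal :: "nat \<Rightarrow> (nat \<Rightarrow> complex) \<Rightarrow> (nat \<Rightarrow> complex) \<Rightarrow> real" where
  "chordal n x y = sqrt (1 - (cmod (vinner n x y) / (vnorm n x * vnorm n y))\<^sup>2)"

definition spec_norm :: "complex set \<Rightarrow> nat \<Rightarrow> nat \<Rightarrow> nat \<Rightarrow> tensor3 \<Rightarrow> real" where
  "spec_norm K I J L M = Sup {cmod (\<Sum>i<I. \<Sum>j<J. \<Sum>k<L. M i j k * x i * y j * z k) | x y z.
      vec_in K I x \<and> vec_in K J y \<and> vec_in K L z \<and>
      vnorm I x = 1 \<and> vnorm J y = 1 \<and> vnorm L z = 1}"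

end

theory Submission
  imports Defs "HOL-Analysis.L2_Norm" "Jordan_Normal_Form.Determinant"
    "Jordan_Normal_Form.Schur_Decomposition" "Jordan_Normal_Form.Char_Poly"
begin

text \<open>For a direction \<open>z\<close>, the slice mix \<open>T(z) = z\<^sub>1 T\<^sub>1 + z\<^sub>2 T\<^sub>2\<close> equals
  \<open>A diag(C\<^sup>T z) B\<^sup>T\<close>, so it stretches unit vectors by at least
  \<open>\<sigma>\<^sub>m\<^sub>i\<^sub>n(A) \<sigma>\<^sub>m\<^sub>i\<^sub>n(B) min\<^sub>r |c\<^sub>r \<bullet> z|\<close> (with the bilinear product
  \<open>x \<bullet> y = \<Sum>\<^sub>i x\<^sub>i y\<^sub>i\<close>), whereas \<open>E(z)\<close> stretches unit vectors of
  \<open>K\<^sup>R\<close> by at most \<open>\<parallel>E\<parallel>\<^sub>s\<^sub>p\<close>. For unit \<open>z\<close> one has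
  \<open>|c\<^sub>i \<bullet> z| + |c\<^sub>j \<bullet> z| \<ge> \<chi>(c\<^sub>i, c\<^sub>j)\<close>, so under the hypothesis at most one column can
  be nearly orthogonal to \<open>z\<close>. Moving \<open>z\<close> along an arc of unit vectors of \<open>K\<^sup>2\<close> from
  a vector orthogonal to one column \<open>c\<close> to \<open>cnj c\<close>, connectedness produces a \<open>z\<close> to
  which no column is nearly orthogonal, and then \<open>T(z) + E(z)\<close> is invertible.

  A tensor of size \<open>R \<times> R \<times> 2\<close> with an invertible slice mix \<open>P\<close> has border rank \<open>R\<close>:
  the determinant of that slice mix is continuous and vanishes on tensors of rank \<open>< R\<close>,
  while both slices lie in the span of \<open>P\<close> and \<open>P N\<close>, and approximating \<open>N\<close> by
  diagonalizable matrices gives decompositions with \<open>R\<close> terms.\<close>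

section \<open>Vectors, matrices and singular values\<close>

lemma sum_lessThan_2: "(\<Sum>k<2. f k) = f 0 + f (1::nat)"
  by (simp add: numeral_2_eq_2)

definition scalar_field :: "complex set \<Rightarrow> bool" where
  "scalar_field K \<longleftrightarrow> K = \<real> \<or> K = UNIV"

lemma scalar_field_closed:
  assumes "scalar_field K"
  shows "a \<in> K \<Longrightarrow> b \<in> K \<Longrightarrow> a + b \<in> K"
    and "a \<in> K \<Longrightarrow> b \<in> K \<Longrightarrow> a - b \<in> K"
    and "a \<in> K \<Longrightarrow> b \<in> K \<Longrightarrow> a * b \<in> K"
    and "a \<in> K \<Longrightarrow> b \<in> K \<Longrightarrow> a / b \<in> K"
    and "a \<in> K \<Longrightarrow> - a \<in> K"
    and "a \<in> K \<Longrightarrow> cnj a \<in> K"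
    and "complex_of_real r \<in> K"
    and "0 \<in> K"
    and "1 \<in> K"
    and "(\<And>i. i \<in> S \<Longrightarrow> f i \<in> K) \<Longrightarrow> (\<Sum>i\<in>S. f i) \<in> K"
  using assms by (auto simp: scalar_field_def Reals_cnj_iff intro: sum_in_Reals)

definition vdot :: "nat \<Rightarrow> (nat \<Rightarrow> complex) \<Rightarrow> (nat \<Rightarrow> complex) \<Rightarrow> complex" where
  "vdot n x y = (\<Sum>i<n. x i * y i)"

lemma vnorm_eq_L2_set: "vnorm n x = L2_set (\<lambda>i. cmod (x i)) {..<n}"
  by (simp add: vnorm_def L2_set_def)

lemma vnorm_nonneg: "0 \<le> vnorm n x"
  by (simp add: vnorm_def sum_nonneg)

lemma vnorm_cong: "(\<And>i. i < n \<Longrightarrow> x i = y i) \<Longrightarrow> vnorm n x = vnorm n y"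
  by (simp add: vnorm_def)

lemma vnorm_uminus: "vnorm n (\<lambda>i. - x i) = vnorm n x"
  by (simp add: vnorm_def)

lemma vnorm_cnj: "vnorm n (\<lambda>i. cnj (x i)) = vnorm n x"
  by (simp add: vnorm_def)

lemma vnorm_scale: "vnorm n (\<lambda>i. c * x i) = cmod c * vnorm n x"
  by (simp add: vnorm_def norm_mult power_mult_distrib sum_distrib_left[symmetric] real_sqrt_mult)

lemma vnorm_eq_0_iff: "vnorm n x = 0 \<longleftrightarrow> (\<forall>i<n. x i = 0)"
  by (auto simp: vnorm_eq_L2_set L2_set_eq_0_iff)

lemma cmod_le_vnorm: "i < n \<Longrightarrow> cmod (x i) \<le> vnorm n x"
  unfolding vnorm_eq_L2_set by (rule member_le_L2_set) auto

lemma vnorm_2_sq: "(vnorm 2 x)\<^sup>2 = (cmod (x 0))\<^sup>2 + (cmod (x 1))\<^sup>2"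
  by (simp add: vnorm_def sum_lessThan_2)

lemma of_real_vnorm_sq: "complex_of_real ((vnorm n x)\<^sup>2) = vinner n x x"
proof -
  have "complex_of_real ((vnorm n x)\<^sup>2) = (\<Sum>i<n. complex_of_real ((cmod (x i))\<^sup>2))"
    by (simp add: vnorm_def sum_nonneg del: of_real_power)
  also have "\<dots> = vinner n x x"
    unfolding vinner_def by (intro sum.cong refl complex_norm_square)
  finally show ?thesis .
qed

lemma cmod_vdot_le: "cmod (vdot n x y) \<le> vnorm n x * vnorm n y"
proof -
  have "cmod (vdot n x y) \<le> (\<Sum>i<n. \<bar>cmod (x i)\<bar> * \<bar>cmod (y i)\<bar>)"
    unfolding vdot_def by (rule order_trans[OF norm_sum]) (simp add: norm_mult)
  also have "\<dots> \<le> vnorm n x * vnorm n y"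
    unfolding vnorm_eq_L2_set by (rule L2_set_mult_ineq)
  finally show ?thesis .
qed

lemma vnorm_mult_lower:
  assumes "0 \<le> m" and "\<And>i. i < n \<Longrightarrow> m \<le> cmod (d i)"
  shows "m * vnorm n x \<le> vnorm n (\<lambda>i. d i * x i)"
proof -
  have "m * vnorm n x = L2_set (\<lambda>i. m * cmod (x i)) {..<n}"
    unfolding vnorm_eq_L2_set using assms(1) by (rule L2_set_right_distrib)
  also have "\<dots> \<le> vnorm n (\<lambda>i. d i * x i)"
    unfolding vnorm_eq_L2_set using assms by (intro L2_set_mono) (auto simp: norm_mult mult_right_mono)
  finally show ?thesis .
qed

definition first_basis_vec :: "nat \<Rightarrow> complex" where
  "first_basis_vec = (\<lambda>i. if i = 0 then 1 else 0)"

lemma vnorm_first_basis_vec: "0 < n \<Longrightarrow> vnorm n first_basis_vec = 1"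
proof -
  assume "0 < n"
  have "(\<Sum>i<n. (cmod (first_basis_vec i))\<^sup>2) = (\<Sum>i<n. if i = 0 then 1 else 0)"
    by (rule sum.cong) (auto simp: first_basis_vec_def)
  with \<open>0 < n\<close> show ?thesis by (simp add: vnorm_def)
qed

lemma vec_in_first_basis_vec: "scalar_field K \<Longrightarrow> vec_in K n first_basis_vec"
  by (auto simp: vec_in_def first_basis_vec_def intro: scalar_field_closed)

lemma normalize_vnorm:
  assumes "vnorm n x \<noteq> 0"
  shows "vnorm n (\<lambda>i. complex_of_real (1 / vnorm n x) * x i) = 1"
  using assms vnorm_nonneg[of n x] by (simp only: vnorm_scale) (simp add: norm_divide)

definition to_mat :: "nat \<Rightarrow> nmat \<Rightarrow> complex mat" where
  "to_mat n M = mat n n (\<lambda>(i, j). M i j)"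

lemma to_mat_carrier [simp]: "to_mat n M \<in> carrier_mat n n"
  and dim_row_to_mat [simp]: "dim_row (to_mat n M) = n"
  and dim_col_to_mat [simp]: "dim_col (to_mat n M) = n"
  by (simp_all add: to_mat_def)

lemma to_mat_index [simp]: "i < n \<Longrightarrow> j < n \<Longrightarrow> to_mat n M $$ (i, j) = M i j"
  by (simp add: to_mat_def)

lemma to_mat_mult_vec_index:
  assumes "i < n" and "v \<in> carrier_vec n"
  shows "(to_mat n M *\<^sub>v v) $ i = mat_vec n M (($) v) i"
  using assms by (simp add: to_mat_def mat_vec_def scalar_prod_def atLeast0LessThan)

lemma mat_vec_scale: "mat_vec n M (\<lambda>j. c * x j) = (\<lambda>i. c * mat_vec n M x i)"
  by (simp add: mat_vec_def sum_distrib_left mult.assoc mult.left_commute)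

lemma det_nonzero_imp_inverse:
  fixes M :: "'a::field mat"
  assumes "M \<in> carrier_mat n n" and "det M \<noteq> 0"
  obtains M' where "M' \<in> carrier_mat n n" "M * M' = 1\<^sub>m n" "M' * M = 1\<^sub>m n"
  using det_non_zero_imp_unit[OF assms, of "()"] that unfolding Units_def ring_mat_def by auto

lemma invertible_mat_iff_det_nonzero:
  fixes M :: "'a::field mat"
  assumes M: "M \<in> carrier_mat n n"
  shows "invertible_mat M \<longleftrightarrow> det M \<noteq> 0"
proof
  assume "invertible_mat M"
  then obtain M' where MM': "M * M' = 1\<^sub>m n" and M'M: "M' * M = 1\<^sub>m (dim_row M')"
    using M unfolding invertible_mat_def inverts_mat_def by auto
  have "dim_col M' = n" using arg_cong[OF MM', of dim_col] by simp
  moreover have "dim_row M' = n" using arg_cong[OF M'M, of dim_col] M by simp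
  ultimately have M': "M' \<in> carrier_mat n n" by auto
  have "det M * det M' = 1" using det_mult[OF M M'] MM' by simp
  then show "det M \<noteq> 0" by auto
next
  assume "det M \<noteq> 0"
  with M obtain M' where "M' \<in> carrier_mat n n" "M * M' = 1\<^sub>m n" "M' * M = 1\<^sub>m n"
    by (rule det_nonzero_imp_inverse)
  with M show "invertible_mat M"
    unfolding invertible_mat_def inverts_mat_def by auto
qed

lemma singular_to_mat_kernel:
  assumes "det (to_mat n M) = 0"
  obtains x where "\<exists>i<n. x i \<noteq> 0" "\<forall>i<n. mat_vec n M x i = 0"
proof -
  obtain v where v: "v \<in> carrier_vec n" "v \<noteq> 0\<^sub>v n" "to_mat n M *\<^sub>v v = 0\<^sub>v n"
    using assms det_0_iff_vec_prod_zero_field[OF to_mat_carrier] by blast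
  have "\<exists>i<n. v $ i \<noteq> 0" using v(1,2) by (auto simp: vec_eq_iff)
  moreover have "\<forall>i<n. mat_vec n M (($) v) i = 0"
    using v(3) by (simp flip: to_mat_mult_vec_index[OF _ v(1)])
  ultimately show ?thesis using that by blast
qed

lemma mat_vec_surj_if_inj:
  assumes inj: "\<And>w. \<forall>i<n. mat_vec n M w i = 0 \<Longrightarrow> \<forall>j<n. w j = 0"
  obtains w where "\<forall>i<n. mat_vec n M w i = g i"
proof -
  have "det (to_mat n M) \<noteq> 0"
  proof
    assume "det (to_mat n M) = 0"
    then obtain x where "\<exists>i<n. x i \<noteq> 0" "\<forall>i<n. mat_vec n M x i = 0"
      by (rule singular_to_mat_kernel)
    with inj show False by blast
  qed
  then obtain M' where M': "M' \<in> carrier_mat n n" "to_mat n M * M' = 1\<^sub>m n"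
    by (rule det_nonzero_imp_inverse[OF to_mat_carrier])
  define v where "v = M' *\<^sub>v vec n g"
  have v: "v \<in> carrier_vec n" using M' by (simp add: v_def)
  have "to_mat n M *\<^sub>v v = vec n g"
    unfolding v_def using M' by (simp flip: assoc_mult_mat_vec[OF to_mat_carrier M'(1)])
  then have "\<forall>i<n. mat_vec n M (($) v) i = g i"
    by (simp flip: to_mat_mult_vec_index[OF _ v])
  with that show ?thesis by blast
qed

lemma sigma_min_mult_le:
  "sigma_min n M * vnorm n y \<le> vnorm n (mat_vec n M y)"
proof (cases "vnorm n y = 0")
  case True
  then show ?thesis by (simp add: vnorm_nonneg)
next
  case False
  then have pos: "vnorm n y > 0" using vnorm_nonneg[of n y] by linarith
  define c where "c = complex_of_real (1 / vnorm n y)"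
  have "vnorm n (\<lambda>i. c * y i) = 1"
    unfolding c_def using False by (rule normalize_vnorm)
  then have "vnorm n (mat_vec n M (\<lambda>i. c * y i)) \<in> {vnorm n (mat_vec n M x) | x. vnorm n x = 1}"
    by blast
  then have "sigma_min n M \<le> vnorm n (mat_vec n M (\<lambda>i. c * y i))"
    unfolding sigma_min_def by (rule cInf_lower) (auto intro: bdd_belowI[where m=0] simp: vnorm_nonneg)
  also have "\<dots> = vnorm n (mat_vec n M y) / vnorm n y"
    using pos by (simp only: mat_vec_scale vnorm_scale) (simp add: c_def norm_divide)
  finally show ?thesis using pos by (simp add: pos_le_divide_eq)
qed

lemma sigma_min_nonneg:
  assumes "0 < n"
  shows "0 \<le> sigma_min n M"
proof -
  have "{vnorm n (mat_vec n M x) | x. vnorm n x = 1} \<noteq> {}"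
    using vnorm_first_basis_vec[OF assms] by blast
  then show ?thesis
    unfolding sigma_min_def by (rule cInf_greatest) (auto simp: vnorm_nonneg)
qed

lemma mat_vec_inj_if_sigma_min_pos:
  assumes "0 < sigma_min n M" and "\<forall>i<n. mat_vec n M w i = 0"
  shows "\<forall>j<n. w j = 0"
proof -
  have "vnorm n (mat_vec n M w) = 0"
    using assms(2) by (simp add: vnorm_eq_0_iff)
  then have "sigma_min n M * vnorm n w \<le> 0"
    using sigma_min_mult_le[of n M w] by simp
  then have "vnorm n w = 0"
    using assms(1) vnorm_nonneg[of n w] by (simp add: mult_le_0_iff)
  then show ?thesis by (simp add: vnorm_eq_0_iff)
qed

lemma vdot_mat_vec: "vdot n (mat_vec n M w) x = vdot n w (\<lambda>r. vdot n (col M r) x)"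
proof -
  have "vdot n (mat_vec n M w) x = (\<Sum>i<n. \<Sum>r<n. w r * (M i r * x i))"
    by (simp add: vdot_def mat_vec_def sum_distrib_left sum_distrib_right mult_ac)
  also have "\<dots> = (\<Sum>r<n. \<Sum>i<n. w r * (M i r * x i))"
    by (rule sum.swap)
  finally show ?thesis
    by (simp add: vdot_def col_def sum_distrib_left)
qed

text \<open>The transpose has the same smallest singular value; only this inequality is needed.
  If \<open>\<sigma> > 0\<close>, then \<open>M\<close> is injective, hence onto, so \<open>cnj x = M w\<close> for some \<open>w\<close>,
  and \<open>\<parallel>x\<parallel>\<^sup>2 = w \<bullet> M\<^sup>T x \<le> \<parallel>w\<parallel> \<parallel>M\<^sup>T x\<parallel>\<close> with \<open>\<sigma> \<parallel>w\<parallel> \<le> \<parallel>x\<parallel>\<close>.\<close>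

lemma sigma_min_mult_transpose_le:
  "sigma_min n M * vnorm n x \<le> vnorm n (\<lambda>r. vdot n (col M r) x)"
proof (cases "sigma_min n M > 0")
  case False
  then have "sigma_min n M * vnorm n x \<le> 0"
    by (simp add: mult_nonpos_nonneg vnorm_nonneg)
  then show ?thesis
    using vnorm_nonneg order_trans by blast
next
  case pos: True
  let ?s = "sigma_min n M" and ?u = "\<lambda>r. vdot n (col M r) x"
  obtain w where w: "\<forall>i<n. mat_vec n M w i = cnj (x i)"
    using mat_vec_inj_if_sigma_min_pos[OF pos] by (rule mat_vec_surj_if_inj) blast
  have "complex_of_real ((vnorm n x)\<^sup>2) = vdot n (mat_vec n M w) x"
    unfolding of_real_vnorm_sq vinner_def vdot_def using w by (simp add: mult.commute)
  also have "\<dots> = vdot n w ?u"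
    by (rule vdot_mat_vec)
  finally have "cmod (complex_of_real ((vnorm n x)\<^sup>2)) = cmod (vdot n w ?u)"
    by (rule arg_cong)
  then have sq: "(vnorm n x)\<^sup>2 \<le> vnorm n w * vnorm n ?u"
    using cmod_vdot_le[of n w ?u] by (simp del: of_real_power)
  have "vnorm n (mat_vec n M w) = vnorm n x"
    using w vnorm_cong[of n "mat_vec n M w" "\<lambda>i. cnj (x i)"] by (simp add: vnorm_cnj)
  then have wx: "?s * vnorm n w \<le> vnorm n x"
    using sigma_min_mult_le[of n M w] by simp
  have "?s * (vnorm n x)\<^sup>2 \<le> ?s * (vnorm n w * vnorm n ?u)"
    using sq pos by simp
  also have "\<dots> \<le> vnorm n x * vnorm n ?u"
    using mult_right_mono[OF wx vnorm_nonneg] by (simp add: mult.assoc)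
  finally have "vnorm n x * (?s * vnorm n x) \<le> vnorm n x * vnorm n ?u"
    by (simp add: power2_eq_square mult_ac)
  then show ?thesis
    using vnorm_nonneg[of n x] vnorm_nonneg[of n ?u]
    by (cases "vnorm n x = 0") auto
qed

section \<open>The chordal metric and a good direction\<close>

definition perp :: "(nat \<Rightarrow> complex) \<Rightarrow> nat \<Rightarrow> complex" where
  "perp c = (\<lambda>k. if k = 0 then - c 1 else c 0)"

lemma vnorm_perp: "vnorm 2 (perp c) = vnorm 2 c"
  by (simp add: vnorm_def perp_def sum_lessThan_2)

lemma vec_in_perp: "scalar_field K \<Longrightarrow> vec_in K 2 c \<Longrightarrow> vec_in K 2 (perp c)"
  by (auto simp: vec_in_def perp_def intro: scalar_field_closed)

lemma chordal_unit_eq_cmod_det: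
  assumes "vnorm 2 x = 1" and "vnorm 2 y = 1"
  shows "chordal 2 x y = cmod (x 0 * y 1 - x 1 * y 0)"
proof -
  have "(cmod (vinner 2 x y))\<^sup>2 + (cmod (x 0 * y 1 - x 1 * y 0))\<^sup>2
      = (vnorm 2 x)\<^sup>2 * (vnorm 2 y)\<^sup>2"
    unfolding vnorm_2_sq vinner_def sum_lessThan_2 cmod_power2
    by (simp add: algebra_simps power2_eq_square)
  then have "1 - (cmod (vinner 2 x y))\<^sup>2 = (cmod (x 0 * y 1 - x 1 * y 0))\<^sup>2"
    using assms by simp
  then show ?thesis
    using assms by (simp add: chordal_def)
qed

text \<open>With \<open>w = cnj (perp z)\<close>, the pair \<open>z, w\<close> is a unitary frame, so
  \<open>det [x y] = (x \<bullet> z) (y \<bullet> w) - (y \<bullet> z) (x \<bullet> w)\<close> with \<open>|x \<bullet> w|, |y \<bullet> w| \<le> 1\<close>.\<close>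

lemma chordal_le_cmod_vdot:
  assumes x: "vnorm 2 x = 1" and y: "vnorm 2 y = 1" and z: "vnorm 2 z = 1"
  shows "chordal 2 x y \<le> cmod (vdot 2 x z) + cmod (vdot 2 y z)"
proof -
  define w where "w = (\<lambda>k. cnj (perp z k))"
  have w: "vnorm 2 w = 1"
    using z by (simp add: w_def vnorm_cnj vnorm_perp)
  have "vinner 2 z z = 1"
    using z of_real_vnorm_sq[of 2 z] by simp
  then have "x 0 * y 1 - x 1 * y 0 = (x 0 * y 1 - x 1 * y 0) * vinner 2 z z"
    by simp
  also have "\<dots> = vdot 2 x z * vdot 2 y w - vdot 2 y z * vdot 2 x w"
    unfolding vinner_def vdot_def w_def perp_def sum_lessThan_2 by (simp add: algebra_simps)
  finally have "chordal 2 x y = cmod (vdot 2 x z * vdot 2 y w - vdot 2 y z * vdot 2 x w)"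
    using chordal_unit_eq_cmod_det[OF x y] by simp
  also have "\<dots> \<le> cmod (vdot 2 x z) * cmod (vdot 2 y w) + cmod (vdot 2 y z) * cmod (vdot 2 x w)"
    by (rule order_trans[OF norm_triangle_ineq4]) (simp add: norm_mult)
  also have "\<dots> \<le> cmod (vdot 2 x z) + cmod (vdot 2 y z)"
    using cmod_vdot_le[of 2 y w] cmod_vdot_le[of 2 x w] x y w
    by (intro add_mono mult_left_le) auto
  finally show ?thesis .
qed

lemma chordal_le_1: "chordal n x y \<le> 1"
  unfolding chordal_def by (simp add: real_sqrt_le_1_iff)

definition chordal_separation :: "nat \<Rightarrow> nat \<Rightarrow> nmat \<Rightarrow> real" where
  "chordal_separation n R C =
     Min {chordal n (col C i) (col C j) | i j. i < R \<and> j < R \<and> i \<noteq> j}"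

lemma chordal_separation_le:
  assumes "i < R" and "j < R" and "i \<noteq> j"
  shows "chordal_separation n R C \<le> chordal n (col C i) (col C j)"
proof -
  have "{chordal n (col C i) (col C j) | i j. i < R \<and> j < R \<and> i \<noteq> j}
      \<subseteq> (\<lambda>(i, j). chordal n (col C i) (col C j)) ` ({..<R} \<times> {..<R})"
    by auto
  then have "finite {chordal n (col C i) (col C j) | i j. i < R \<and> j < R \<and> i \<noteq> j}"
    by (rule finite_subset) auto
  then show ?thesis
    unfolding chordal_separation_def using assms by (intro Min_le) auto
qed

lemma chordal_separation_le_1: "2 \<le> R \<Longrightarrow> chordal_separation n R C \<le> 1"
  using chordal_separation_le[of 0 R 1 n C] chordal_le_1[of n "col C 0" "col C 1"] by simp

lemma chordal_separation_le_cmod_vdot: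
  assumes "\<forall>r<R. vnorm 2 (col C r) = 1" and "vnorm 2 z = 1"
    and "i < R" and "j < R" and "i \<noteq> j"
  shows "chordal_separation 2 R C \<le> cmod (vdot 2 (col C i) z) + cmod (vdot 2 (col C j) z)"
  using chordal_separation_le[OF assms(3-5)] chordal_le_cmod_vdot assms(1-4) by (meson order_trans)

lemma connected_subset_of_closed_partition:
  fixes F :: "'i \<Rightarrow> 'a::topological_space set"
  assumes S: "connected S" and I: "finite I" and closed: "\<And>i. i \<in> I \<Longrightarrow> closed (F i)"
    and disjoint: "\<And>i j. i \<in> I \<Longrightarrow> j \<in> I \<Longrightarrow> i \<noteq> j \<Longrightarrow> F i \<inter> F j \<inter> S = {}"
    and cover: "S \<subseteq> (\<Union>i\<in>I. F i)"
    and i: "i \<in> I" and x: "x \<in> S" "x \<in> F i"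
  shows "S \<subseteq> F i"
proof -
  let ?G = "\<Union>j\<in>I - {i}. F j"
  have "F i \<inter> S = {} \<or> ?G \<inter> S = {}"
  proof (rule connected_closedD[OF S])
    show "F i \<inter> ?G \<inter> S = {}" using disjoint i by blast
    show "S \<subseteq> F i \<union> ?G" using cover by blast
    show "closed (F i)" "closed ?G" using closed i I by auto
  qed
  with x cover show ?thesis by blast
qed

definition arc_to_cnj :: "(nat \<Rightarrow> complex) \<Rightarrow> real \<Rightarrow> nat \<Rightarrow> complex" where
  "arc_to_cnj c t = (\<lambda>k. of_real (cos t) * perp c k + of_real (sin t) * cnj (c k))"

lemma vnorm_arc_to_cnj:
  assumes "vnorm 2 c = 1"
  shows "vnorm 2 (arc_to_cnj c t) = 1"
proof -
  have rotation: "(cmod (of_real a * - c 1 + of_real b * cnj (c 0)))\<^sup>2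
      + (cmod (of_real a * c 0 + of_real b * cnj (c 1)))\<^sup>2 = (a\<^sup>2 + b\<^sup>2) * (vnorm 2 c)\<^sup>2"
    for a b :: real
    unfolding vnorm_2_sq cmod_power2 by (simp add: algebra_simps power2_eq_square)
  have "(vnorm 2 (arc_to_cnj c t))\<^sup>2 = (vnorm 2 c)\<^sup>2"
    using rotation[of "cos t" "sin t"] by (simp add: vnorm_2_sq arc_to_cnj_def perp_def)
  then show ?thesis
    using assms vnorm_nonneg[of 2 "arc_to_cnj c t"] by (simp add: power2_eq_1_iff)
qed

lemma vdot_arc_to_cnj:
  assumes "vnorm 2 c = 1"
  shows "vdot 2 c (arc_to_cnj c t) = of_real (sin t)"
proof -
  have "vdot 2 c (arc_to_cnj c t) = of_real (sin t) * vinner 2 c c"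
    unfolding vdot_def vinner_def arc_to_cnj_def perp_def sum_lessThan_2
    by (simp add: algebra_simps)
  then show ?thesis
    using assms of_real_vnorm_sq[of 2 c] by simp
qed

lemma vec_in_arc_to_cnj:
  "scalar_field K \<Longrightarrow> vec_in K 2 c \<Longrightarrow> vec_in K 2 (arc_to_cnj c t)"
  using vec_in_perp[of K c] by (auto simp: vec_in_def arc_to_cnj_def intro!: scalar_field_closed)

text \<open>Along the arc from \<open>perp c\<^sub>0\<close> to \<open>cnj c\<^sub>0\<close>, the parameter sets on which some
  \<open>|c\<^sub>r \<bullet> z| \<le> \<epsilon>\<close> holds are closed and, by the separation of the columns, pairwise
  disjoint. If they covered the arc, connectedness would trap it in the set for \<open>r = 0\<close>,
  which contains the start but not the end.\<close>

lemma exists_direction_separating_columns: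
  assumes K: "scalar_field K" and R: "2 \<le> R" and C: "mat_in K 2 R C"
    and C_unit: "\<forall>r<R. vnorm 2 (col C r) = 1"
    and \<epsilon>: "0 \<le> \<epsilon>" "\<epsilon> < chordal_separation 2 R C / 2"
  obtains z where "vec_in K 2 z" "vnorm 2 z = 1" "\<forall>r<R. \<epsilon> < cmod (vdot 2 (col C r) z)"
proof (rule ccontr)
  assume no_z: "\<not> thesis"
  let ?z = "arc_to_cnj (col C 0)"
  have c0: "vnorm 2 (col C 0) = 1" "vec_in K 2 (col C 0)"
    using C_unit C R by (auto simp: vec_in_def mat_in_def col_def)
  define F where "F r = {t. cmod (vdot 2 (col C r) (?z t)) \<le> \<epsilon>}" for r
  have "{0..pi/2} \<subseteq> F 0"
  proof (rule connected_subset_of_closed_partition[where I = "{..<R}"])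
    show "closed (F r)" for r
      unfolding F_def vdot_def arc_to_cnj_def by (intro closed_Collect_le continuous_intros)
    show "F r \<inter> F q \<inter> {0..pi/2} = {}" if "r \<in> {..<R}" "q \<in> {..<R}" "r \<noteq> q" for r q
    proof -
      have "t \<notin> F r \<inter> F q" for t
        using chordal_separation_le_cmod_vdot[OF C_unit vnorm_arc_to_cnj[OF c0(1)], of r q t] that \<epsilon>
        by (auto simp: F_def)
      then show ?thesis by blast
    qed
    show "{0..pi/2} \<subseteq> (\<Union>r\<in>{..<R}. F r)"
      using no_z that vec_in_arc_to_cnj[OF K c0(2)] vnorm_arc_to_cnj[OF c0(1)]
      by (force simp: F_def not_less)
    show "0 \<in> F 0"
      using \<epsilon> by (simp add: F_def vdot_arc_to_cnj[OF c0(1)])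
  qed (use R in auto)
  moreover have "pi/2 \<notin> F 0"
    using \<epsilon> chordal_separation_le_1[OF R, of 2 C] by (simp add: F_def vdot_arc_to_cnj[OF c0(1)])
  moreover have "pi/2 \<in> {0..pi/2}"
    using pi_ge_zero by simp
  ultimately show False
    by blast
qed

section \<open>Invertibility of the perturbed slice mix\<close>

definition slice_mix :: "nat \<Rightarrow> (nat \<Rightarrow> complex) \<Rightarrow> tensor3 \<Rightarrow> nmat" where
  "slice_mix L c T = (\<lambda>i j. \<Sum>k<L. c k * T i j k)"

lemma slice_mix_invertible_iff:
  "slice_mix_invertible K n L T \<longleftrightarrow> (\<exists>c. vec_in K L c \<and> invertible_mat (to_mat n (slice_mix L c T)))"
  by (simp add: slice_mix_invertible_def to_mat_def slice_mix_def)

lemma mat_vec_slice_mix_tadd: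
  "mat_vec n (slice_mix L z (tadd S T)) x i = mat_vec n (slice_mix L z S) x i + mat_vec n (slice_mix L z T) x i"
  by (simp add: mat_vec_def slice_mix_def tadd_def distrib_left distrib_right sum.distrib)

lemma mat_vec_slice_mix_tensor_eq:
  assumes "tensor_eq n n L S T" and "i < n"
  shows "mat_vec n (slice_mix L z S) x i = mat_vec n (slice_mix L z T) x i"
  using assms by (simp add: mat_vec_def slice_mix_def tensor_eq_def)

lemma mat_vec_slice_mix_cpd:
  "mat_vec n (slice_mix L z (cpd R A B C)) x
     = mat_vec R A (\<lambda>r. vdot L (col C r) z * vdot n (col B r) x)"
proof
  fix i
  have "mat_vec n (slice_mix L z (cpd R A B C)) x i
      = (\<Sum>j<n. \<Sum>k<L. \<Sum>r<R. A i r * ((C k r * z k) * (B j r * x j)))"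
    by (simp add: mat_vec_def slice_mix_def cpd_def sum_distrib_left sum_distrib_right mult_ac)
  also have "\<dots> = (\<Sum>j<n. \<Sum>r<R. \<Sum>k<L. A i r * ((C k r * z k) * (B j r * x j)))"
    by (intro sum.cong refl sum.swap)
  also have "\<dots> = (\<Sum>r<R. \<Sum>j<n. \<Sum>k<L. A i r * ((C k r * z k) * (B j r * x j)))"
    by (rule sum.swap)
  also have "\<dots> = mat_vec R A (\<lambda>r. vdot L (col C r) z * vdot n (col B r) x) i"
    by (simp add: mat_vec_def vdot_def col_def sum_distrib_left sum_distrib_right)
  finally show "mat_vec n (slice_mix L z (cpd R A B C)) x i
      = mat_vec R A (\<lambda>r. vdot L (col C r) z * vdot n (col B r) x) i" .
qed

lemma slice_mix_cpd_lower_bound: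
  assumes "0 < n" and "0 \<le> m" and "\<forall>r<n. m \<le> cmod (vdot L (col C r) z)"
  shows "sigma_min n A * sigma_min n B * m * vnorm n x
    \<le> vnorm n (mat_vec n (slice_mix L z (cpd n A B C)) x)"
proof -
  let ?u = "\<lambda>r. vdot n (col B r) x"
  let ?y = "\<lambda>r. vdot L (col C r) z * ?u r"
  have "sigma_min n A * sigma_min n B * m * vnorm n x = sigma_min n A * (m * (sigma_min n B * vnorm n x))"
    by (simp add: mult_ac)
  also have "\<dots> \<le> sigma_min n A * (m * vnorm n ?u)"
    using sigma_min_mult_transpose_le[of n B x] sigma_min_nonneg[OF assms(1)] assms(2)
    by (intro mult_left_mono) auto
  also have "\<dots> \<le> sigma_min n A * vnorm n ?y"
    using vnorm_mult_lower[of m n] assms sigma_min_nonneg[OF assms(1)]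
    by (intro mult_left_mono) auto
  also have "\<dots> \<le> vnorm n (mat_vec n A ?y)"
    by (rule sigma_min_mult_le)
  finally show ?thesis
    by (simp only: mat_vec_slice_mix_cpd)
qed

lemma spec_norm_upper:
  assumes "vec_in K I x" "vec_in K J y" "vec_in K L z"
    and "vnorm I x = 1" "vnorm J y = 1" "vnorm L z = 1"
  shows "cmod (\<Sum>i<I. \<Sum>j<J. \<Sum>k<L. M i j k * x i * y j * z k) \<le> spec_norm K I J L M"
  unfolding spec_norm_def
proof (rule cSup_upper)
  show "cmod (\<Sum>i<I. \<Sum>j<J. \<Sum>k<L. M i j k * x i * y j * z k)
    \<in> {cmod (\<Sum>i<I. \<Sum>j<J. \<Sum>k<L. M i j k * x i * y j * z k) | x y z.
      vec_in K I x \<and> vec_in K J y \<and> vec_in K L z \<and> vnorm I x = 1 \<and> vnorm J y = 1 \<and> vnorm L z = 1}"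
    using assms by blast
  have "cmod (\<Sum>i<I. \<Sum>j<J. \<Sum>k<L. M i j k * x i * y j * z k) \<le> (\<Sum>i<I. \<Sum>j<J. \<Sum>k<L. cmod (M i j k))"
    if "vnorm I x = 1" "vnorm J y = 1" "vnorm L z = 1" for x y z
  proof -
    have "cmod (M i j k * x i * y j * z k) \<le> cmod (M i j k)" if "i < I" "j < J" "k < L" for i j k
    proof -
      have "cmod (x i) * cmod (y j) * cmod (z k) \<le> 1"
        using cmod_le_vnorm[of i I x] cmod_le_vnorm[of j J y] cmod_le_vnorm[of k L z]
          \<open>vnorm I x = 1\<close> \<open>vnorm J y = 1\<close> \<open>vnorm L z = 1\<close> that
        by (simp add: mult_le_one)
      then have "cmod (M i j k) * (cmod (x i) * cmod (y j) * cmod (z k)) \<le> cmod (M i j k) * 1"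
        by (intro mult_left_mono) auto
      then show ?thesis
        by (simp add: norm_mult mult_ac)
    qed
    then show ?thesis
      by (intro order_trans[OF norm_sum] sum_mono order_trans[OF norm_sum]) auto
  qed
  then show "bdd_above {cmod (\<Sum>i<I. \<Sum>j<J. \<Sum>k<L. M i j k * x i * y j * z k) | x y z.
      vec_in K I x \<and> vec_in K J y \<and> vec_in K L z \<and> vnorm I x = 1 \<and> vnorm J y = 1 \<and> vnorm L z = 1}"
    by (intro bdd_aboveI) blast
qed

lemma spec_norm_nonneg:
  assumes "scalar_field K" and "0 < I" "0 < J" "0 < L"
  shows "0 \<le> spec_norm K I J L M"
  using spec_norm_upper[of K I first_basis_vec J first_basis_vec L first_basis_vec M] assms
  by (meson norm_ge_zero order_trans vec_in_first_basis_vec vnorm_first_basis_vec)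

lemma vnorm_slice_mix_le_spec_norm:
  assumes K: "scalar_field K" and E: "tensor_in K n n L E"
    and z: "vec_in K L z" "vnorm L z = 1" and x: "vec_in K n x" "vnorm n x = 1"
  shows "vnorm n (mat_vec n (slice_mix L z E) x) \<le> spec_norm K n n L E"
proof -
  define v where "v = mat_vec n (slice_mix L z E) x"
  have "0 < n" "0 < L"
    using x(2) z(2) by (auto intro!: Nat.gr0I simp: vnorm_def)
  show ?thesis
  proof (cases "vnorm n v = 0")
    case True
    then show ?thesis
      using spec_norm_nonneg[OF K \<open>0 < n\<close> \<open>0 < n\<close> \<open>0 < L\<close>] by (simp add: v_def)
  next
    case False
    define y where "y = (\<lambda>i. complex_of_real (1 / vnorm n v) * cnj (v i))"
    have "v i \<in> K" if "i < n" for i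
      using z(1) x(1) E that unfolding v_def mat_vec_def slice_mix_def
      by (intro scalar_field_closed[OF K]) (auto simp: vec_in_def tensor_in_def)
    then have "vec_in K n y"
      by (auto simp: vec_in_def y_def intro: scalar_field_closed[OF K])
    moreover have "vnorm n y = 1"
      unfolding y_def using False vnorm_nonneg[of n v]
      by (simp only: vnorm_scale vnorm_cnj) (simp add: norm_divide)
    moreover have "(\<Sum>i<n. \<Sum>j<n. \<Sum>k<L. E i j k * y i * x j * z k) = of_real (vnorm n v)"
    proof -
      have "(\<Sum>i<n. \<Sum>j<n. \<Sum>k<L. E i j k * y i * x j * z k) = (\<Sum>i<n. y i * v i)"
        by (simp add: v_def mat_vec_def slice_mix_def sum_distrib_left sum_distrib_right mult_ac)
      also have "\<dots> = complex_of_real (1 / vnorm n v) * vinner n v v"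
        by (simp add: y_def vinner_def sum_distrib_left mult_ac)
      also have "\<dots> = of_real (vnorm n v)"
        using False by (simp add: of_real_vnorm_sq[symmetric] power2_eq_square)
      finally show ?thesis .
    qed
    ultimately show ?thesis
      using spec_norm_upper[of K n y n x L z E] x z by (simp add: v_def vnorm_nonneg)
  qed
qed

lemma mat_vec_of_real_Re_Im:
  assumes "\<forall>j<n. M i j \<in> \<real>"
  shows "mat_vec n M (\<lambda>j. of_real (Re (x j))) i = of_real (Re (mat_vec n M x i))"
    and "mat_vec n M (\<lambda>j. of_real (Im (x j))) i = of_real (Im (mat_vec n M x i))"
proof -
  have Im_M: "Im (M i j) = 0" if "j < n" for j
    using assms that by (simp add: complex_is_Real_iff)
  show "mat_vec n M (\<lambda>j. of_real (Re (x j))) i = of_real (Re (mat_vec n M x i))"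
    "mat_vec n M (\<lambda>j. of_real (Im (x j))) i = of_real (Im (mat_vec n M x i))"
    unfolding mat_vec_def by (auto simp: complex_eq_iff Re_sum Im_sum Im_M intro!: sum.cong)
qed

lemma Reals_kernel_vector:
  assumes M: "\<forall>i<n. \<forall>j<n. M i j \<in> \<real>"
    and x: "\<exists>i<n. x i \<noteq> 0" "\<forall>i<n. mat_vec n M x i = 0"
  obtains y where "vec_in \<real> n y" "\<exists>i<n. y i \<noteq> 0" "\<forall>i<n. mat_vec n M y i = 0"
proof -
  obtain i0 where i0: "i0 < n" "x i0 \<noteq> 0" using x(1) by blast
  let ?re = "\<lambda>j. complex_of_real (Re (x j))" and ?im = "\<lambda>j. complex_of_real (Im (x j))"
  have "?re i0 \<noteq> 0 \<or> ?im i0 \<noteq> 0" using i0(2) by (auto simp: complex_eq_iff)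
  moreover have "vec_in \<real> n ?re" "vec_in \<real> n ?im" by (auto simp: vec_in_def)
  moreover have "\<forall>i<n. mat_vec n M ?re i = 0" "\<forall>i<n. mat_vec n M ?im i = 0"
    using mat_vec_of_real_Re_Im[of n M] M x(2) by auto
  ultimately show ?thesis using that i0(1) by blast
qed

lemma invertible_to_mat_if_nonzero_on_unit_vectors:
  assumes K: "scalar_field K" and M: "\<forall>i<n. \<forall>j<n. M i j \<in> K"
    and nonzero: "\<And>x. vec_in K n x \<Longrightarrow> vnorm n x = 1 \<Longrightarrow> \<exists>i<n. mat_vec n M x i \<noteq> 0"
  shows "invertible_mat (to_mat n M)"
proof (rule ccontr)
  assume "\<not> invertible_mat (to_mat n M)"
  then have "det (to_mat n M) = 0"
    using invertible_mat_iff_det_nonzero[OF to_mat_carrier] by blast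
  then obtain x where x: "\<exists>i<n. x i \<noteq> 0" "\<forall>i<n. mat_vec n M x i = 0"
    by (rule singular_to_mat_kernel)
  obtain y where y: "vec_in K n y" "\<exists>i<n. y i \<noteq> 0" "\<forall>i<n. mat_vec n M y i = 0"
  proof (cases "K = UNIV")
    case True
    with x that show ?thesis by (auto simp: vec_in_def)
  next
    case False
    with K M x that show ?thesis
      by (auto simp: scalar_field_def elim: Reals_kernel_vector)
  qed
  define c where "c = complex_of_real (1 / vnorm n y)"
  have "vnorm n y \<noteq> 0" using y(2) vnorm_eq_0_iff by blast
  then have "vnorm n (\<lambda>j. c * y j) = 1" unfolding c_def by (rule normalize_vnorm)
  moreover have "vec_in K n (\<lambda>j. c * y j)"
    using y(1) unfolding vec_in_def c_def by (auto intro!: scalar_field_closed[OF K])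
  ultimately obtain i where "i < n" "mat_vec n M (\<lambda>j. c * y j) i \<noteq> 0"
    using nonzero by blast
  with y(3) show False
    by (simp add: mat_vec_scale)
qed

lemma tensor_in_cpd:
  assumes "scalar_field K" "mat_in K I R A" "mat_in K J R B" "mat_in K L R C"
    and "tensor_eq I J L T (cpd R A B C)"
  shows "tensor_in K I J L T"
  using assms unfolding tensor_in_def tensor_eq_def cpd_def mat_in_def
  by (auto intro!: scalar_field_closed)

lemma perturbed_cpd_slice_mix_invertible:
  assumes K: "scalar_field K" and n: "0 < n"
    and T: "tensor_in K n n L T" "tensor_eq n n L T (cpd n A B C)"
    and E: "tensor_in K n n L E"
    and z: "vec_in K L z" "vnorm L z = 1"
    and small: "\<forall>r<n. spec_norm K n n L E < sigma_min n A * sigma_min n B * cmod (vdot L (col C r) z)"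
  shows "invertible_mat (to_mat n (slice_mix L z (tadd T E)))"
proof -
  let ?d = "\<lambda>r. cmod (vdot L (col C r) z)"
  define m where "m = Min (?d ` {..<n})"
  have "m \<in> ?d ` {..<n}" unfolding m_def using n by (intro Min_in) auto
  then have small_m: "spec_norm K n n L E < sigma_min n A * sigma_min n B * m"
    using small by auto
  have m: "0 \<le> m" "\<forall>r<n. m \<le> ?d r"
    using \<open>m \<in> ?d ` {..<n}\<close> by (auto simp: m_def)
  show ?thesis
  proof (rule invertible_to_mat_if_nonzero_on_unit_vectors[OF K])
    show "\<forall>i<n. \<forall>j<n. slice_mix L z (tadd T E) i j \<in> K"
      using T(1) E z(1) unfolding slice_mix_def tadd_def tensor_in_def vec_in_def
      by (auto intro!: scalar_field_closed[OF K])
    fix x assume x: "vec_in K n x" "vnorm n x = 1"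
    show "\<exists>i<n. mat_vec n (slice_mix L z (tadd T E)) x i \<noteq> 0"
    proof (rule ccontr)
      assume "\<not> ?thesis"
      then have "mat_vec n (slice_mix L z (cpd n A B C)) x i = - mat_vec n (slice_mix L z E) x i"
        if "i < n" for i
        using that mat_vec_slice_mix_tadd[of n L z T E x i] mat_vec_slice_mix_tensor_eq[OF T(2) that]
        by (simp add: eq_neg_iff_add_eq_0)
      then have "vnorm n (mat_vec n (slice_mix L z (cpd n A B C)) x)
          = vnorm n (mat_vec n (slice_mix L z E) x)"
        by (subst vnorm_uminus[symmetric]) (rule vnorm_cong)
      also have "\<dots> \<le> spec_norm K n n L E"
        by (rule vnorm_slice_mix_le_spec_norm[OF K E z x])
      also have "\<dots> < sigma_min n A * sigma_min n B * m * vnorm n x"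
        using small_m x(2) by simp
      also have "\<dots> \<le> vnorm n (mat_vec n (slice_mix L z (cpd n A B C)) x)"
        by (rule slice_mix_cpd_lower_bound[OF n m])
      finally show False by simp
    qed
  qed
qed

section \<open>Border rank of tensors with an invertible slice mix\<close>

lemma tendsto_det_to_mat:
  assumes "\<forall>i<n. \<forall>j<n. (\<lambda>q. g q i j) \<longlonglongrightarrow> h i j"
  shows "(\<lambda>q. det (to_mat n (g q))) \<longlonglongrightarrow> det (to_mat n h)"
proof -
  have "(\<lambda>q. \<Sum>p | p permutes {0..<n}. signof p * (\<Prod>i = 0..<n. to_mat n (g q) $$ (i, p i)))
    \<longlonglongrightarrow> (\<Sum>p | p permutes {0..<n}. signof p * (\<Prod>i = 0..<n. to_mat n h $$ (i, p i)))"
  proof (intro tendsto_sum tendsto_mult tendsto_const tendsto_prod)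
    fix p i assume "p \<in> {p. p permutes {0..<n}}" and i: "i \<in> {0..<n}"
    then have "p i < n" by (simp add: permutes_in_image)
    then show "(\<lambda>q. to_mat n (g q) $$ (i, p i)) \<longlonglongrightarrow> to_mat n h $$ (i, p i)"
      using assms i by simp
  qed
  then show ?thesis
    by (simp only: det_def'[OF to_mat_carrier])
qed

lemma slice_mix_cpd: "slice_mix L c (cpd m A B C) i j = (\<Sum>r<m. A i r * B j r * vdot L (col C r) c)"
proof -
  have "slice_mix L c (cpd m A B C) i j = (\<Sum>k<L. \<Sum>r<m. A i r * B j r * (C k r * c k))"
    by (simp add: slice_mix_def cpd_def sum_distrib_left mult_ac)
  also have "\<dots> = (\<Sum>r<m. \<Sum>k<L. A i r * B j r * (C k r * c k))"
    by (rule sum.swap)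
  finally show ?thesis
    by (simp add: vdot_def col_def sum_distrib_left)
qed

text \<open>A slice mix of a tensor of rank \<open>m < n\<close> factors through \<open>\<complex>\<^sup>m\<close>.\<close>

lemma det_slice_mix_eq_0_if_rank_le:
  assumes "rank_le UNIV n n L S m" and "m < n"
  shows "det (to_mat n (slice_mix L c S)) = 0"
proof -
  from assms(1) obtain A B C where S: "tensor_eq n n L S (cpd m A B C)"
    unfolding rank_le_def by blast
  define A0 where "A0 = to_mat n (\<lambda>i r. if r < m then A i r else 0)"
  define B0 where "B0 = to_mat n (\<lambda>r j. if r < m then B j r * vdot L (col C r) c else 0)"
  have A0: "A0 \<in> carrier_mat n n" and B0: "B0 \<in> carrier_mat n n"
    by (simp_all add: A0_def B0_def)
  have "to_mat n (slice_mix L c S) = A0 * B0"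
  proof (rule eq_matI)
    fix i j assume "i < dim_row (A0 * B0)" "j < dim_col (A0 * B0)"
    then have i: "i < n" and j: "j < n" using A0 B0 by auto
    have "(A0 * B0) $$ (i, j) = (\<Sum>r<n. A0 $$ (i, r) * B0 $$ (r, j))"
      using A0 B0 i j by (simp add: scalar_prod_def atLeast0LessThan)
    also have "\<dots> = (\<Sum>r<m. A i r * B j r * vdot L (col C r) c)"
      using assms(2) i j
      by (intro sum.mono_neutral_cong_right) (auto simp: A0_def B0_def mult.assoc)
    also have "\<dots> = slice_mix L c (cpd m A B C) i j"
      by (rule slice_mix_cpd[symmetric])
    also have "\<dots> = slice_mix L c S i j"
      using S i j by (simp add: slice_mix_def tensor_eq_def)
    finally show "to_mat n (slice_mix L c S) $$ (i, j) = (A0 * B0) $$ (i, j)"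
      using i j by simp
  qed (use A0 B0 in auto)
  moreover have "det A0 = 0"
  proof -
    let ?e = "unit_vec n (n - 1) :: complex vec"
    have "(A0 *\<^sub>v ?e) $ i = 0" if "i < n" for i
      unfolding A0_def to_mat_mult_vec_index[OF that unit_vec_carrier]
      using assms(2) by (auto simp: mat_vec_def intro!: sum.neutral)
    then have "A0 *\<^sub>v ?e = 0\<^sub>v n"
      using A0 by (intro eq_vecI) auto
    moreover have "?e \<noteq> 0\<^sub>v n"
      using assms(2) by simp
    ultimately show ?thesis
      using det_0_iff_vec_prod_zero_field[OF A0] unit_vec_carrier by blast
  qed
  ultimately show ?thesis
    using det_mult[OF A0 B0] by simp
qed

lemma border_rank_le_imp_ge:
  assumes inv: "invertible_mat (to_mat n (slice_mix L c T))"
    and "border_rank_le n n L T m"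
  shows "n \<le> m"
proof (rule ccontr)
  assume "\<not> n \<le> m"
  from assms(2) obtain S where S: "\<forall>q. rank_le UNIV n n L (S q) m"
    and lim: "\<forall>i<n. \<forall>j<n. \<forall>k<L. (\<lambda>q. S q i j k) \<longlonglongrightarrow> T i j k"
    unfolding border_rank_le_def by blast
  have "\<forall>i<n. \<forall>j<n. (\<lambda>q. slice_mix L c (S q) i j) \<longlonglongrightarrow> slice_mix L c T i j"
    using lim unfolding slice_mix_def by (auto intro!: tendsto_intros)
  then have "(\<lambda>q. det (to_mat n (slice_mix L c (S q)))) \<longlonglongrightarrow> det (to_mat n (slice_mix L c T))"
    by (rule tendsto_det_to_mat)
  moreover have "det (to_mat n (slice_mix L c (S q))) = 0" for q
    using det_slice_mix_eq_0_if_rank_le[of n L "S q" m c] S \<open>\<not> n \<le> m\<close> by simp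
  ultimately have "det (to_mat n (slice_mix L c T)) = 0"
    by (simp add: LIMSEQ_const_iff)
  with inv show False
    using invertible_mat_iff_det_nonzero[OF to_mat_carrier] by blast
qed

text \<open>Column \<open>j\<close> of an eigenvector matrix of an upper triangular \<open>U\<close> with distinct
  diagonal: back substitution in \<open>(U - U\<^sub>j\<^sub>j) v = 0\<close> with \<open>v\<^sub>j = 1\<close> and
  \<open>v\<^sub>i = 0\<close> for \<open>i > j\<close>.\<close>

function tri_eigvec :: "'a::field mat \<Rightarrow> nat \<Rightarrow> nat \<Rightarrow> 'a" where
  "tri_eigvec U j i =
    (if j < i then 0 else if i = j then 1
     else (\<Sum>l\<in>{i<..j}. U $$ (i, l) * tri_eigvec U j l) / (U $$ (j, j) - U $$ (i, i)))"
  by pat_completeness auto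
termination by (relation "measure (\<lambda>(U, j, i). j - i)") auto

declare tri_eigvec.simps [simp del]

lemma tri_eigvec_below [simp]: "j < i \<Longrightarrow> tri_eigvec U j i = 0"
  and tri_eigvec_diag [simp]: "tri_eigvec U j j = 1"
  and tri_eigvec_above: "i < j \<Longrightarrow> tri_eigvec U j i =
    (\<Sum>l\<in>{i<..j}. U $$ (i, l) * tri_eigvec U j l) / (U $$ (j, j) - U $$ (i, i))"
  by (simp_all add: tri_eigvec.simps[of U j i] tri_eigvec.simps[of U j j])

lemma tri_eigvec_eigen:
  assumes U: "U \<in> carrier_mat n n" "upper_triangular U"
    and distinct: "\<forall>i<n. \<forall>j<n. i \<noteq> j \<longrightarrow> U $$ (i, i) \<noteq> U $$ (j, j)"
    and i: "i < n" and j: "j < n"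
  shows "(\<Sum>l<n. U $$ (i, l) * tri_eigvec U j l) = U $$ (j, j) * tri_eigvec U j i"
proof (cases "j < i")
  case True
  have "U $$ (i, l) * tri_eigvec U j l = 0" for l
    using U i True by (cases "l < i") auto
  with True show ?thesis by simp
next
  case False
  have "(\<Sum>l<n. U $$ (i, l) * tri_eigvec U j l) = (\<Sum>l\<in>insert i {i<..j}. U $$ (i, l) * tri_eigvec U j l)"
    using U i j False
    by (intro sum.mono_neutral_right) (auto simp: not_less upper_triangular_def)
  also have "\<dots> = U $$ (i, i) * tri_eigvec U j i + (\<Sum>l\<in>{i<..j}. U $$ (i, l) * tri_eigvec U j l)"
    by simp
  also have "\<dots> = U $$ (j, j) * tri_eigvec U j i"
  proof (cases "i = j")
    case False
    with \<open>\<not> j < i\<close> distinct i j have "U $$ (j, j) - U $$ (i, i) \<noteq> 0" by auto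
    with \<open>\<not> j < i\<close> False show ?thesis
      by (simp add: tri_eigvec_above field_simps)
  qed simp
  finally show ?thesis .
qed

lemma upper_triangular_similar_mat_diag:
  fixes U :: "'a::field mat"
  assumes U: "U \<in> carrier_mat n n" "upper_triangular U"
    and distinct: "\<forall>i<n. \<forall>j<n. i \<noteq> j \<longrightarrow> U $$ (i, i) \<noteq> U $$ (j, j)"
  obtains V V' where "similar_mat_wit U (mat_diag n (\<lambda>i. U $$ (i, i))) V V'"
proof -
  define V where "V = mat n n (\<lambda>(i, j). tri_eigvec U j i)"
  let ?D = "mat_diag n (\<lambda>i. U $$ (i, i))"
  have V: "V \<in> carrier_mat n n" by (simp add: V_def)
  have "det V = prod_list (diag_mat V)"
    using V by (intro det_upper_triangular) (auto simp: V_def)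
  also have "diag_mat V = replicate n 1"
    by (rule nth_equalityI) (auto simp: diag_mat_def V_def)
  finally obtain V' where V': "V' \<in> carrier_mat n n" "V * V' = 1\<^sub>m n" "V' * V = 1\<^sub>m n"
    using det_nonzero_imp_inverse[OF V] by auto
  have "U * V = V * ?D"
  proof (rule eq_matI)
    fix i j assume "i < dim_row (V * ?D)" "j < dim_col (V * ?D)"
    then have i: "i < n" and j: "j < n" using V by (auto simp: mat_diag_def)
    have "(U * V) $$ (i, j) = (\<Sum>l<n. U $$ (i, l) * tri_eigvec U j l)"
      using U i j by (simp add: V_def scalar_prod_def atLeast0LessThan)
    also have "\<dots> = tri_eigvec U j i * U $$ (j, j)"
      using tri_eigvec_eigen[OF U distinct i j] by (simp add: mult.commute)
    also have "\<dots> = V $$ (i, j) * U $$ (j, j)"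
      using i j by (simp add: V_def)
    also have "\<dots> = (V * ?D) $$ (i, j)"
      using i j by (simp add: mat_diag_mult_right[OF V])
    finally show "(U * V) $$ (i, j) = (V * ?D) $$ (i, j)" .
  qed (use U V in \<open>auto simp: mat_diag_def\<close>)
  have "U = U * (V * V')"
    using U V'(2) by simp
  also have "\<dots> = U * V * V'"
    using U V V'(1) by (simp add: assoc_mult_mat)
  also have "\<dots> = V * ?D * V'"
    by (simp add: \<open>U * V = V * ?D\<close>)
  finally have "U = V * ?D * V'" .
  with U V V' have "similar_mat_wit U ?D V V'"
    by (intro similar_mat_witI[of V V' n]) auto
  then show ?thesis by (rule that)
qed

lemma exists_shift_with_distinct_diag:
  fixes U :: "complex mat"
  assumes "e > 0"
  obtains t where "0 < t" "t < e"
    "\<forall>i<n. \<forall>j<n. i \<noteq> j \<longrightarrow> U $$ (i, i) + of_real t * of_nat i \<noteq> U $$ (j, j) + of_real t * of_nat j"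
proof -
  define bad where "bad = {t::real. \<exists>i<n. \<exists>j<n. i \<noteq> j \<and>
      U $$ (i, i) + of_real t * of_nat i = U $$ (j, j) + of_real t * of_nat j}"
  have "bad \<subseteq> (\<lambda>(i, j). Re (U $$ (j, j) - U $$ (i, i)) / (real i - real j)) ` ({..<n} \<times> {..<n})"
  proof
    fix t assume "t \<in> bad"
    then obtain i j where ij: "i < n" "j < n" "i \<noteq> j"
      and "U $$ (i, i) + of_real t * of_nat i = U $$ (j, j) + of_real t * of_nat j"
      unfolding bad_def by blast
    then have "t * (real i - real j) = Re (U $$ (j, j) - U $$ (i, i))"
      by (simp add: complex_eq_iff algebra_simps)
    with ij have "t = Re (U $$ (j, j) - U $$ (i, i)) / (real i - real j)"
      by (simp add: field_simps)
    with ij show "t \<in> (\<lambda>(i, j). Re (U $$ (j, j) - U $$ (i, i)) / (real i - real j)) ` ({..<n} \<times> {..<n})"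
      by force
  qed
  then have "finite bad" by (rule finite_subset) auto
  with assms have "infinite ({0<..<e} - bad)" by (simp add: Diff_infinite_finite)
  then obtain t where "t \<in> {0<..<e}" "t \<notin> bad" by (metis Diff_iff finite.emptyI ex_in_conv)
  then show ?thesis
    by (intro that) (auto simp: bad_def)
qed

lemma similar_mat_wit_add_smult:
  fixes N :: "'a::comm_ring_1 mat"
  assumes NU: "similar_mat_wit N U W W'" and N: "N \<in> carrier_mat n n" and D: "D \<in> carrier_mat n n"
  shows "similar_mat_wit (N + t \<cdot>\<^sub>m (W * D * W')) (U + t \<cdot>\<^sub>m D) W W'"
proof -
  from similar_mat_witD2[OF N NU]
  have WW': "W * W' = 1\<^sub>m n" "W' * W = 1\<^sub>m n" and NWU: "N = W * U * W'"
    and U: "U \<in> carrier_mat n n" and W: "W \<in> carrier_mat n n" and W': "W' \<in> carrier_mat n n"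
    by auto
  have "W * (U + t \<cdot>\<^sub>m D) = W * U + t \<cdot>\<^sub>m (W * D)"
    using U D W by (simp add: mult_add_distrib_mat mult_smult_distrib)
  also have "(W * U + t \<cdot>\<^sub>m (W * D)) * W' = W * U * W' + (t \<cdot>\<^sub>m (W * D)) * W'"
    using U D W W' by (intro add_mult_distrib_mat) auto
  also have "(t \<cdot>\<^sub>m (W * D)) * W' = t \<cdot>\<^sub>m (W * D * W')"
    using D W W' by (intro mult_smult_assoc_mat) auto
  finally have "W * (U + t \<cdot>\<^sub>m D) * W' = W * U * W' + t \<cdot>\<^sub>m (W * D * W')" .
  with NWU WW' U D W W' show ?thesis
    by (intro similar_mat_witI[of W W' n]) auto
qed

text \<open>Diagonalizable matrices are dense: perturb a Schur form \<open>N = W U W\<^sup>-\<^sup>1\<close> to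
  \<open>U + t diag(0, 1, \<dots>, n - 1)\<close>, which has distinct eigenvalues for all but finitely many
  \<open>t\<close>.\<close>

lemma diagonalizable_perturbation:
  fixes N :: "complex mat"
  assumes N: "N \<in> carrier_mat n n"
  obtains G where "G \<in> carrier_mat n n"
    "\<And>e. e > 0 \<Longrightarrow> \<exists>t. 0 < t \<and> t < e \<and>
       (\<exists>V V' d. similar_mat_wit (N + of_real t \<cdot>\<^sub>m G) (mat_diag n d) V V')"
proof -
  obtain es where "char_poly N = (\<Prod>a\<leftarrow>es. [:- a, 1:])"
    using char_poly_factorized[OF N] by blast
  from schur_decomposition_exists[OF N this]
  obtain U where U: "U \<in> carrier_mat n n" "upper_triangular U" and "similar_mat N U"
    by blast
  then obtain W W' where NU: "similar_mat_wit N U W W'"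
    unfolding similar_mat_def by blast
  then have W: "W \<in> carrier_mat n n" "W' \<in> carrier_mat n n"
    using similar_mat_witD2[OF N] by auto
  define D where "D = mat_diag n (\<lambda>i. of_nat i :: complex)"
  have D: "D \<in> carrier_mat n n" by (simp add: D_def)
  show ?thesis
  proof (rule that[of "W * D * W'"])
    show "W * D * W' \<in> carrier_mat n n" using W D by auto
    fix e :: real assume "e > 0"
    then obtain t where t: "0 < t" "t < e" and distinct:
      "\<forall>i<n. \<forall>j<n. i \<noteq> j \<longrightarrow> U $$ (i, i) + of_real t * of_nat i \<noteq> U $$ (j, j) + of_real t * of_nat j"
      by (rule exists_shift_with_distinct_diag)
    let ?Ut = "U + of_real t \<cdot>\<^sub>m D"
    have Ut: "?Ut \<in> carrier_mat n n" "upper_triangular ?Ut"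
      using U D by (auto simp: D_def mat_diag_def upper_triangular_def)
    have "\<forall>i<n. \<forall>j<n. i \<noteq> j \<longrightarrow> ?Ut $$ (i, i) \<noteq> ?Ut $$ (j, j)"
      using distinct U D by (simp add: D_def mat_diag_def)
    then obtain V V' where "similar_mat_wit ?Ut (mat_diag n (\<lambda>i. ?Ut $$ (i, i))) V V'"
      using upper_triangular_similar_mat_diag[OF Ut] by blast
    with similar_mat_wit_add_smult[OF NU N D]
    have "similar_mat_wit (N + of_real t \<cdot>\<^sub>m (W * D * W')) (mat_diag n (\<lambda>i. ?Ut $$ (i, i))) (W * V) (V' * W')"
      by (rule similar_mat_wit_trans)
    with t show "\<exists>t. 0 < t \<and> t < e \<and>
       (\<exists>V V' d. similar_mat_wit (N + of_real t \<cdot>\<^sub>m (W * D * W')) (mat_diag n d) V V')"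
      by blast
  qed
qed

lemma diagonalizable_sequence:
  fixes N :: "complex mat"
  assumes N: "N \<in> carrier_mat n n"
  obtains G t where "G \<in> carrier_mat n n" "t \<longlonglongrightarrow> 0"
    "\<And>q. \<exists>V V' d. similar_mat_wit (N + of_real (t q) \<cdot>\<^sub>m G) (mat_diag n d) V V'"
proof -
  obtain G where G: "G \<in> carrier_mat n n" and approx: "\<And>e. e > 0 \<Longrightarrow> \<exists>t. 0 < t \<and> t < e \<and>
       (\<exists>V V' d. similar_mat_wit (N + of_real t \<cdot>\<^sub>m G) (mat_diag n d) V V')"
    using diagonalizable_perturbation[OF N] by blast
  have "\<forall>q. \<exists>s. 0 < s \<and> s < inverse (real (Suc q)) \<and>
      (\<exists>V V' d. similar_mat_wit (N + of_real s \<cdot>\<^sub>m G) (mat_diag n d) V V')"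
    using approx by simp
  then obtain t where t: "\<And>q. 0 < t q \<and> t q < inverse (real (Suc q))"
    and diag: "\<And>q. \<exists>V V' d. similar_mat_wit (N + of_real (t q) \<cdot>\<^sub>m G) (mat_diag n d) V V'"
    by (metis choice)
  have "t \<longlonglongrightarrow> 0"
    using t by (intro tendsto_sandwich[OF _ _ tendsto_const LIMSEQ_inverse_real_of_nat])
      (auto intro!: always_eventually less_imp_le)
  with G diag that show ?thesis by blast
qed

lemma index_mult_mat_diag_mult:
  assumes "X \<in> carrier_mat n n" "Y \<in> carrier_mat n n" "i < n" "j < n"
  shows "(X * mat_diag n d * Y) $$ (i, j) = (\<Sum>r<n. X $$ (i, r) * d r * Y $$ (r, j))"
  using assms by (simp add: mat_diag_mult_right scalar_prod_def atLeast0LessThan)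

lemma rank_le_of_diagonalizable_pencil:
  fixes P M :: "complex mat"
  assumes P: "P \<in> carrier_mat n n" and M: "M \<in> carrier_mat n n"
    and MD: "similar_mat_wit M (mat_diag n d) V V'"
    and S: "\<forall>i<n. \<forall>j<n. \<forall>k<L. S i j k = \<alpha> k * P $$ (i, j) + \<beta> k * (P * M) $$ (i, j)"
  shows "rank_le UNIV n n L S n"
proof -
  have V: "V \<in> carrier_mat n n" "V' \<in> carrier_mat n n" "V * V' = 1\<^sub>m n"
    using similar_mat_witD2[OF M MD] by auto
  have M_eq: "M = V * mat_diag n d * V'"
    using similar_mat_witD2(3)[OF M MD] .
  define X where "X = P * V"
  have X: "X \<in> carrier_mat n n" using P V by (simp add: X_def)
  have "P = X * V'"
    using P V by (simp add: X_def assoc_mult_mat[of P n n V n V' n])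
  then have P_idx: "P $$ (i, j) = (\<Sum>r<n. X $$ (i, r) * V' $$ (r, j))" if "i < n" "j < n" for i j
    using X V that by (simp add: scalar_prod_def atLeast0LessThan)
  have "P * M = X * mat_diag n d * V'"
    using P V by (simp add: M_eq X_def assoc_mult_mat[of _ n n _ n _ n])
  then have PM_idx: "(P * M) $$ (i, j) = (\<Sum>r<n. X $$ (i, r) * d r * V' $$ (r, j))"
    if "i < n" "j < n" for i j
    using index_mult_mat_diag_mult[OF X V(2) that] by simp
  have "S i j k = \<alpha> k * (\<Sum>r<n. X $$ (i, r) * V' $$ (r, j))
      + \<beta> k * (\<Sum>r<n. X $$ (i, r) * d r * V' $$ (r, j))"
    if "i < n" "j < n" "k < L" for i j k
    using S that by (simp add: P_idx PM_idx)
  then have "S i j k = (\<Sum>r<n. X $$ (i, r) * V' $$ (r, j) * (\<alpha> k + \<beta> k * d r))"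
    if "i < n" "j < n" "k < L" for i j k
    using that by (simp add: sum_distrib_left distrib_left sum.distrib mult_ac)
  then show ?thesis
    unfolding rank_le_def tensor_eq_def cpd_def
    by (intro exI[of _ "\<lambda>i r. X $$ (i, r)"] exI[of _ "\<lambda>j r. V' $$ (r, j)"]
        exI[of _ "\<lambda>k r. \<alpha> k + \<beta> k * d r"]) (auto simp: mat_in_def)
qed

lemma pencil_of_invertible_slice_mix:
  assumes inv: "invertible_mat (to_mat n (slice_mix 2 c T))"
  obtains \<alpha> \<beta> Q where "\<forall>i<n. \<forall>j<n. \<forall>k<2. T i j k = \<alpha> k * slice_mix 2 c T i j + \<beta> k * Q i j"
proof (cases "c 0 = 0")
  case False
  show ?thesis
    by (rule that[of "\<lambda>k. if k = 0 then 1 / c 0 else 0" "\<lambda>k. if k = 0 then - c 1 / c 0 else 1"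
          "\<lambda>i j. T i j 1"])
      (use False in \<open>auto simp: slice_mix_def sum_lessThan_2 less_2_cases_iff field_simps\<close>)
next
  case True
  show ?thesis
  proof (cases "n = 0")
    case False
    have "c 1 \<noteq> 0"
    proof
      assume "c 1 = 0"
      with True have "to_mat n (slice_mix 2 c T) = 0\<^sub>m n n"
        by (intro eq_matI) (auto simp: slice_mix_def sum_lessThan_2)
      moreover have "det (to_mat n (slice_mix 2 c T)) \<noteq> 0"
        using inv invertible_mat_iff_det_nonzero[OF to_mat_carrier] by blast
      ultimately show False
        using False by simp
    qed
    then show ?thesis
      by (intro that[of "\<lambda>k. if k = 0 then 0 else 1 / c 1" "\<lambda>k. if k = 0 then 1 else 0"
            "\<lambda>i j. T i j 0"])
        (use True in \<open>auto simp: slice_mix_def sum_lessThan_2 less_2_cases_iff field_simps\<close>)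
  qed (rule that, simp)
qed

lemma border_rank_le_of_invertible_slice_mix:
  assumes inv: "invertible_mat (to_mat n (slice_mix 2 c T))"
  shows "border_rank_le n n 2 T n"
proof -
  let ?P = "to_mat n (slice_mix 2 c T)"
  obtain \<alpha> \<beta> Q where T: "\<forall>i<n. \<forall>j<n. \<forall>k<2. T i j k = \<alpha> k * slice_mix 2 c T i j + \<beta> k * Q i j"
    using inv by (rule pencil_of_invertible_slice_mix)
  have "det ?P \<noteq> 0"
    using inv invertible_mat_iff_det_nonzero[OF to_mat_carrier] by blast
  then obtain P' where P': "P' \<in> carrier_mat n n" "?P * P' = 1\<^sub>m n"
    by (rule det_nonzero_imp_inverse[OF to_mat_carrier])
  define N where "N = P' * to_mat n Q"
  have N: "N \<in> carrier_mat n n" using P' by (simp add: N_def)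
  obtain G t where G: "G \<in> carrier_mat n n" and t: "t \<longlonglongrightarrow> 0"
    and diag: "\<And>q. \<exists>V V' d. similar_mat_wit (N + of_real (t q) \<cdot>\<^sub>m G) (mat_diag n d) V V'"
    using diagonalizable_sequence[OF N] by blast
  have PN: "?P * (N + of_real s \<cdot>\<^sub>m G) = to_mat n Q + of_real s \<cdot>\<^sub>m (?P * G)" for s
  proof -
    have "?P * N = to_mat n Q"
      using P' by (simp add: N_def flip: assoc_mult_mat[of _ n n P' n _ n])
    then show ?thesis
      using N G by (simp add: mult_add_distrib_mat[of _ n n] mult_smult_distrib[of _ n n])
  qed
  define S where "S q i j k = T i j k + of_real (t q) * \<beta> k * (?P * G) $$ (i, j)" for q i j k
  have "rank_le UNIV n n 2 (S q) n" for q
  proof -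
    obtain V V' d where "similar_mat_wit (N + of_real (t q) \<cdot>\<^sub>m G) (mat_diag n d) V V'"
      using diag by blast
    moreover have "S q i j k = \<alpha> k * ?P $$ (i, j) + \<beta> k * (?P * (N + of_real (t q) \<cdot>\<^sub>m G)) $$ (i, j)"
      if "i < n" "j < n" "k < 2" for i j k
      unfolding PN using T G that by (simp add: S_def algebra_simps)
    ultimately show ?thesis
      using N G by (intro rank_le_of_diagonalizable_pencil[OF to_mat_carrier]) auto
  qed
  moreover have "(\<lambda>q. S q i j k) \<longlonglongrightarrow> T i j k" for i j k
    unfolding S_def using t by (auto intro!: tendsto_eq_intros)
  ultimately show ?thesis
    unfolding border_rank_le_def by blast
qed

lemma border_rank_eq_of_invertible_slice_mix:
  assumes "invertible_mat (to_mat n (slice_mix 2 c T))"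
  shows "border_rank n n 2 T = n"
  unfolding border_rank_def
  using border_rank_le_of_invertible_slice_mix[OF assms] border_rank_le_imp_ge[OF assms]
  by (intro Least_equality) auto

theorem proposition4p4:
  fixes K :: "complex set" and R :: nat and A B C :: nmat and T E :: tensor3
  assumes K: "K = \<real> \<or> K = UNIV"
    and R2: "R \<ge> 2"
    and A: "mat_in K R R A" and B: "mat_in K R R B" and C: "mat_in K 2 R C"
    and T_cpd: "tensor_eq R R 2 T (cpd R A B C)"
    and T_rank: "tensor_rank K R R 2 T = R"
    and C_unit: "\<forall>r<R. vnorm 2 (col C r) = 1"
    and E_in: "tensor_in K R R 2 E"
    and E_small: "spec_norm K R R 2 E <
       sigma_min R A * sigma_min R B *
       Min {chordal 2 (col C i) (col C j) | i j. i < R \<and> j < R \<and> i \<noteq> j} / 2"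
  shows "slice_mix_invertible K R 2 (tadd T E) \<and> border_rank R R 2 (tadd T E) = R"
proof -
  have K: "scalar_field K" and R: "0 < R"
    using K R2 by (auto simp: scalar_field_def)
  let ?\<rho> = "spec_norm K R R 2 E" and ?\<sigma> = "sigma_min R A * sigma_min R B"
  have \<rho>: "0 \<le> ?\<rho>" by (rule spec_norm_nonneg[OF K R R]) simp
  have small: "?\<rho> < ?\<sigma> * chordal_separation 2 R C / 2"
    using E_small by (simp add: chordal_separation_def)
  have \<sigma>: "0 < ?\<sigma>"
    using sigma_min_nonneg[OF R, of A] sigma_min_nonneg[OF R, of B] \<rho> small by (auto simp: less_le)
  obtain z where z: "vec_in K 2 z" "vnorm 2 z = 1"
    and far: "\<forall>r<R. ?\<rho> / ?\<sigma> < cmod (vdot 2 (col C r) z)"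
    using exists_direction_separating_columns[OF K R2 C C_unit, of "?\<rho> / ?\<sigma>"] \<rho> \<sigma> small
    by (auto simp: field_simps)
  have "invertible_mat (to_mat R (slice_mix 2 z (tadd T E)))"
  proof (rule perturbed_cpd_slice_mix_invertible[OF K R _ T_cpd E_in z])
    show "tensor_in K R R 2 T" by (rule tensor_in_cpd[OF K A B C T_cpd])
    show "\<forall>r<R. ?\<rho> < ?\<sigma> * cmod (vdot 2 (col C r) z)"
      using far \<sigma> by (simp add: pos_divide_less_eq mult.commute)
  qed
  with z show ?thesis
    using border_rank_eq_of_invertible_slice_mix slice_mix_invertible_iff by blast
qed

end
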